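(* For every $r\in\mathbb N$ and every $s>0$, the Hardy–Steklov-type operator $\mathcal P_r(s)$ maps $\mathbf E$ into $\mathbf E^{r}$.
   Context: Let $G=\mathbb R_+\times\mathbb R$ be the "$ax+b$" group with multiplication $(a_1,b_1)(a_2,b_2)=(a_1a_2,\,a_1b_2+b_1)$. Let $T$ be a strongly continuous representation of $G$ in a Banach space $\mathbf E$ with $\|T(g)f\|_{\mathbf E}\le\|f\|_{\mathbf E}$. Put $T_1(t)=T(e^{t},0)$, $T_2(t)=T(1,t)$, with (closed) generators $\mathbb A_1,\mathbb A_2$. For $r\in\mathbb N$, $\mathbf E^{r}$ is the space of $f\in\mathbf E$ for which all products $\mathbb A_{j_1}\cdots\mathbb A_{j_k}f$, $1\le k\le r$, $j_i\in\{1,2\}$, are defined (with the norm $\|f\|_{\mathbf E}+\sum_{k=1}^r\sum_{(j_1,\dots,j_k)}\|\mathbb A_{j_1}\cdots\mathbb A_{j_k}f\|_{\mathbf E}$). For $s>0$, $r\in\mathbb N$ and $f\in\mathbf E$, $$\mathcal P_r(s)f=(s/r)^{-2r}\int_{[0,s/r]^{2r}}T_1(t_{1,1}+\dots+t_{1,r})\,T_2(t_{2,1}+\dots+t_{2,r})f\;dt_{1,1}\cdots dt_{1,r}\,dt_{2,1}\cdots dt_{2,r}$$ (Bochner integral). *)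

theory Defs
  imports "HOL-Analysis.Analysis"
begin

text \<open>The ax+b group G = R_+ x R is modelled by pairs (a,b) :: real \<times> real with a > 0.\<close>

definition axb_mult :: "real \<times> real \<Rightarrow> real \<times> real \<Rightarrow> real \<times> real" where
  "axb_mult g1 g2 = (fst g1 * fst g2, fst g1 * snd g2 + snd g1)"

definition contr_rep :: "(real \<times> real \<Rightarrow> 'a::banach \<Rightarrow> 'a) \<Rightarrow> bool" where
  "contr_rep T \<longleftrightarrow>
     (\<forall>g. fst g > 0 \<longrightarrow> bounded_linear (T g)) \<and>
     T (1, 0) = id \<and>
     (\<forall>g1 g2. fst g1 > 0 \<longrightarrow> fst g2 > 0 \<longrightarrow> T (axb_mult g1 g2) = T g1 \<circ> T g2) \<and>
     (\<forall>f. continuous_on ({0<..} \<times> UNIV) (\<lambda>g. T g f)) \<and>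
     (\<forall>g f. fst g > 0 \<longrightarrow> norm (T g f) \<le> norm f)"

definition oneparam :: "(real \<times> real \<Rightarrow> 'a \<Rightarrow> 'a) \<Rightarrow> nat \<Rightarrow> real \<Rightarrow> 'a \<Rightarrow> 'a" where
  "oneparam T j t = (if j = 1 then T (exp t, 0) else T (1, t))"

definition generator_at :: "(real \<Rightarrow> 'a::real_normed_vector \<Rightarrow> 'a) \<Rightarrow> 'a \<Rightarrow> 'a \<Rightarrow> bool" where
  "generator_at S f y \<longleftrightarrow> ((\<lambda>t. (S t f - f) /\<^sub>R t) \<longlongrightarrow> y) (at_right 0)"

text \<open>word_app T js f y: the product A_{j_1} ... A_{j_k} f is defined and equals y,
  where js = [j_1, ..., j_k] (A_{j_k} applied first).\<close>
inductive word_app :: "(real \<times> real \<Rightarrow> 'a::real_normed_vector \<Rightarrow> 'a) \<Rightarrow> nat list \<Rightarrow> 'a \<Rightarrow> 'a \<Rightarrow> bool"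
  for T where
  nil: "word_app T [] f f"
| cons: "word_app T js f g \<Longrightarrow> generator_at (oneparam T j) g y \<Longrightarrow> word_app T (j # js) f y"

definition Er :: "(real \<times> real \<Rightarrow> 'a::real_normed_vector \<Rightarrow> 'a) \<Rightarrow> nat \<Rightarrow> 'a set" where
  "Er T r = {f. \<forall>js. js \<noteq> [] \<longrightarrow> length js \<le> r \<longrightarrow> set js \<subseteq> {1, 2} \<longrightarrow> (\<exists>y. word_app T js f y)}"

fun cube_int :: "nat \<Rightarrow> real \<Rightarrow> (real list \<Rightarrow> 'a::real_normed_vector) \<Rightarrow> 'a" where
  "cube_int 0 h F = F []"
| "cube_int (Suc n) h F = integral {0..h} (\<lambda>t. cube_int n h (\<lambda>ts. F (t # ts)))"

text \<open>The Hardy--Steklov type operator P_r(s); variables ordered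
  t_{1,1},...,t_{1,r},t_{2,1},...,t_{2,r}.\<close>
definition hs_op :: "(real \<times> real \<Rightarrow> 'a::real_normed_vector \<Rightarrow> 'a) \<Rightarrow> nat \<Rightarrow> real \<Rightarrow> 'a \<Rightarrow> 'a" where
  "hs_op T r s f = inverse ((s / real r) ^ (2 * r)) *\<^sub>R
     cube_int (2 * r) (s / real r)
       (\<lambda>ts. oneparam T 1 (sum_list (take r ts)) (oneparam T 2 (sum_list (drop r ts)) f))"

end

theory Submission
  imports Defs
begin

text \<open>
  With h = s/r one has P_r(s) = h^(-2r) M_1^r M_2^r, where M_j x = integral of T_j(t) x over
  [0,h] is a Steklov mean. A Steklov mean lies in the domain of the generator,
  A_j M_j x = T_j(h) x - x, so M_2^r f has r iterated A_2-derivatives. The group law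
  (1,u)(e^t,0) = (e^t,0)(1,e^(-t) u) gives T_2(u) T_1(t) = T_1(t) T_2(e^(-t) u), hence
  A_2 T_1(t) = e^(-t) T_1(t) A_2. Integrating, A_2 carries the weighted mean
  M_1^(a) z = integral of e^(-at) T_1(t) z over [0,h] to M_1^(a+1) A_2 z, while A_1 commutes
  with T_1(c) and sends M_1^(a) x to e^(-ah) T_1(h) x - x + a M_1^(a) x. By induction on k,
  T_1(c) applied to k weighted means of a vector with k iterated A_2-derivatives lies in the
  domain of every word of length at most k in A_1 and A_2.
\<close>

section \<open>Generators of operator families\<close>

lemma generator_at_add:
  assumes "\<And>t. linear (S t)" "generator_at S x y" "generator_at S x' y'"
  shows "generator_at S (x + x') (y + y')"
proof -
  have "((\<lambda>t. (S t x - x) /\<^sub>R t + (S t x' - x') /\<^sub>R t) \<longlongrightarrow> y + y') (at_right 0)"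
    using assms(2,3) unfolding generator_at_def by (intro tendsto_add)
  then show ?thesis
    unfolding generator_at_def
    by (simp add: linear_add[OF assms(1)] algebra_simps scaleR_diff_right)
qed

lemma generator_at_scaleR:
  assumes "\<And>t. linear (S t)" "generator_at S x y"
  shows "generator_at S (c *\<^sub>R x) (c *\<^sub>R y)"
proof -
  have "((\<lambda>t. c *\<^sub>R ((S t x - x) /\<^sub>R t)) \<longlongrightarrow> c *\<^sub>R y) (at_right 0)"
    using assms(2) unfolding generator_at_def by (intro tendsto_scaleR tendsto_const)
  then show ?thesis
    unfolding generator_at_def
    by (simp add: linear_scale[OF assms(1)] algebra_simps scaleR_diff_right)
qed

lemma generator_at_intertwining:
  assumes L: "bounded_linear L" and "\<kappa> > 0"
    and intertw: "\<And>t x. S t (L x) = L (R (\<kappa> * t) x)"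
    and gen: "generator_at R w v"
  shows "generator_at S (L w) (\<kappa> *\<^sub>R L v)"
proof -
  have "filterlim (\<lambda>t. \<kappa> * t) (at_right 0) (at_right 0)"
    using \<open>\<kappa> > 0\<close>
    by (auto simp: filterlim_at eventually_at_filter intro!: tendsto_eq_intros)
  then have "((\<lambda>t. (R (\<kappa> * t) w - w) /\<^sub>R (\<kappa> * t)) \<longlongrightarrow> v) (at_right 0)"
    using filterlim_compose[OF gen[unfolded generator_at_def]] by blast
  then have "((\<lambda>t. \<kappa> *\<^sub>R L ((R (\<kappa> * t) w - w) /\<^sub>R (\<kappa> * t))) \<longlongrightarrow> \<kappa> *\<^sub>R L v) (at_right 0)"
    by (intro tendsto_scaleR tendsto_const bounded_linear.tendsto[OF L])
  moreover have "\<kappa> *\<^sub>R L ((R (\<kappa> * t) w - w) /\<^sub>R (\<kappa> * t)) = (S t (L w) - L w) /\<^sub>R t" for t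
    using \<open>\<kappa> > 0\<close>
    by (simp add: intertw linear_scale[OF bounded_linear.linear[OF L]]
        linear_diff[OF bounded_linear.linear[OF L]])
  ultimately show ?thesis
    unfolding generator_at_def by simp
qed

lemma generator_at_exp_rescaled:
  assumes "generator_at (\<lambda>t x. exp (c * t) *\<^sub>R S t x) w v"
  shows "generator_at S w (v - c *\<^sub>R w)"
proof -
  have "((\<lambda>t. exp (- c * t)) \<longlongrightarrow> 1) (at_right 0)"
    by (auto intro!: tendsto_eq_intros)
  moreover have "((\<lambda>t. (exp (- c * t) - 1) / t) \<longlongrightarrow> - c) (at_right 0)"
  proof -
    have "((\<lambda>t. exp (- c * t)) has_real_derivative - c) (at 0)"
      by (auto intro!: derivative_eq_intros)
    then show ?thesis
      unfolding has_field_derivative_iff by (simp add: filterlim_at_split)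
  qed
  ultimately have "((\<lambda>t. exp (- c * t) *\<^sub>R ((exp (c * t) *\<^sub>R S t w - w) /\<^sub>R t)
      + ((exp (- c * t) - 1) / t) *\<^sub>R w) \<longlongrightarrow> 1 *\<^sub>R v + (- c) *\<^sub>R w) (at_right 0)"
    using assms unfolding generator_at_def by (intro tendsto_intros)
  moreover have "exp (- c * t) *\<^sub>R ((exp (c * t) *\<^sub>R S t w - w) /\<^sub>R t)
      + ((exp (- c * t) - 1) / t) *\<^sub>R w = (S t w - w) /\<^sub>R t" for t
    by (simp add: scaleR_diff_right divide_inverse_commute algebra_simps exp_minus_inverse
        flip: exp_add scaleR_add_left)
  ultimately show ?thesis
    unfolding generator_at_def by simp
qed

lemma has_vector_derivative_imp_right_quotient:
  fixes f :: "real \<Rightarrow> 'a::real_normed_vector"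
  assumes "(f has_vector_derivative v) (at x within {x..b})" and "x < b"
  shows "((\<lambda>t. (f (x + t) - f x) /\<^sub>R t) \<longlongrightarrow> v) (at_right 0)"
proof -
  have "((\<lambda>y. (f y - f x - (y - x) *\<^sub>R v) /\<^sub>R norm (y - x)) \<longlongrightarrow> 0) (at_right x)"
    using assms at_within_Icc_at_right[OF \<open>x < b\<close>]
    by (simp add: has_vector_derivative_def has_derivative_at_within)
  then have "((\<lambda>y. (f y - f x - (y - x) *\<^sub>R v) /\<^sub>R norm (y - x) + v) \<longlongrightarrow> 0 + v) (at_right x)"
    by (intro tendsto_add tendsto_const)
  moreover have "eventually (\<lambda>y. (f y - f x - (y - x) *\<^sub>R v) /\<^sub>R norm (y - x) + v
      = (f y - f x) /\<^sub>R (y - x)) (at_right x)"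
    by (auto simp: eventually_at_filter scaleR_diff_right)
  ultimately have "((\<lambda>y. (f y - f x) /\<^sub>R (y - x)) \<longlongrightarrow> v) (at_right x)"
    using Lim_transform_eventually by fastforce
  then show ?thesis
    using at_right_to_0[of x] by (simp add: filterlim_filtermap add.commute)
qed

lemma tendsto_integral_average_right:
  fixes f :: "real \<Rightarrow> 'a::banach"
  assumes "continuous_on UNIV f"
  shows "((\<lambda>t. integral {c..c + t} f /\<^sub>R t) \<longlongrightarrow> f c) (at_right 0)"
proof -
  have "((\<lambda>v. integral {c..v} f) has_vector_derivative f c) (at c within {c..c + 1})"
    by (rule integral_has_vector_derivative) (auto intro: continuous_on_subset[OF assms])
  from has_vector_derivative_imp_right_quotient[OF this] show ?thesis
    by simp
qed

lemma generator_at_integral_of_uniform: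
  fixes f g :: "real \<Rightarrow> 'a::banach"
  assumes S: "\<And>u. bounded_linear (S u)" and f: "continuous_on {a..b} f"
    and lim: "uniform_limit {a..b} (\<lambda>u t. (S u (f t) - f t) /\<^sub>R u) g (at_right 0)"
  shows "generator_at S (integral {a..b} f) (integral {a..b} g)"
proof -
  define D where "D u x = (S u x - x) /\<^sub>R u" for u x
  have D: "bounded_linear (D u)" for u
    unfolding D_def
    by (intro bounded_linear_compose[OF bounded_linear_scaleR_right]
        bounded_linear_sub S bounded_linear_ident)
  obtain I J where I: "\<And>u. ((\<lambda>t. D u (f t)) has_integral I u) {a..b}"
    and J: "(g has_integral J) {a..b}" and "(I \<longlongrightarrow> J) (at_right 0)"
    by (rule uniform_limit_integral[OF lim[folded D_def]])
      (auto intro: continuous_on_compose2[OF linear_continuous_on[OF D] f])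
  moreover have "I = (\<lambda>u. D u (integral {a..b} f))"
    using integral_unique[OF I] integral_linear[OF integrable_continuous_real[OF f] D]
    by (auto simp: o_def)
  moreover have "J = integral {a..b} g"
    using J by (simp add: integral_unique)
  ultimately show ?thesis
    unfolding generator_at_def D_def by simp
qed

section \<open>Strongly continuous groups and Steklov means\<close>

locale strongly_continuous_group =
  fixes U :: "real \<Rightarrow> 'a::banach \<Rightarrow> 'a"
  assumes bounded_linear_op: "bounded_linear (U t)"
    and add: "U (s + t) x = U s (U t x)"
    and zero: "U 0 x = x"
    and continuous: "continuous_on UNIV (\<lambda>t. U t x)"
begin

lemma linear_op: "linear (U t)"
  using bounded_linear_op by (rule bounded_linear.linear)

lemmas linear_op_simps = linear_add[OF linear_op] linear_diff[OF linear_op] linear_scale[OF linear_op]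

lemma integrable: "(\<lambda>t. U t x) integrable_on {a..b}"
  by (rule integrable_continuous_real) (rule continuous_on_subset[OF continuous], simp)

lemma integral_commute: "U c (integral {a..b} (\<lambda>t. U t x)) = integral {a..b} (\<lambda>t. U t (U c x))"
proof -
  have "U c (integral {a..b} (\<lambda>t. U t x)) = integral {a..b} (\<lambda>t. U c (U t x))"
    using integral_linear[OF integrable[where a=a and b=b] bounded_linear_op[of c]]
    by (simp add: o_def)
  also have "\<dots> = integral {a..b} (\<lambda>t. U t (U c x))"
    by (simp add: add.commute flip: add)
  finally show ?thesis .
qed

lemma integral_translate:
  assumes "c \<ge> 0" "h \<ge> 0"
  shows "U c (integral {0..h} (\<lambda>t. U t x)) - integral {0..h} (\<lambda>t. U t x)
    = integral {h..h + c} (\<lambda>t. U t x) - integral {0..c} (\<lambda>t. U t x)"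
proof -
  have "U c (integral {0..h} (\<lambda>t. U t x)) = integral {c..h + c} (\<lambda>t. U t x)"
    using integral_shift_real_ivl[where f="\<lambda>t. U t x" and a=c and b="h + c" and c=c]
    by (simp add: integral_commute flip: add)
  moreover have "integral {0..c} (\<lambda>t. U t x) + integral {c..h + c} (\<lambda>t. U t x)
      = integral {0..h} (\<lambda>t. U t x) + integral {h..h + c} (\<lambda>t. U t x)"
    using assms by (simp add: Henstock_Kurzweil_Integration.integral_combine integrable)
  ultimately show ?thesis
    by (simp add: algebra_simps)
qed

lemma generator_at_integral:
  assumes "h > 0"
  shows "generator_at U (integral {0..h} (\<lambda>t. U t x)) (U h x - x)"
proof -
  have "((\<lambda>t.
      integral {h..h + t} (\<lambda>t. U t x) /\<^sub>R t - integral {0..0 + t} (\<lambda>t. U t x) /\<^sub>R t)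
      \<longlongrightarrow> U h x - U 0 x) (at_right 0)"
    by (intro tendsto_diff tendsto_integral_average_right continuous)
  moreover have "eventually (\<lambda>t.
      integral {h..h + t} (\<lambda>t. U t x) /\<^sub>R t - integral {0..0 + t} (\<lambda>t. U t x) /\<^sub>R t
      = (U t (integral {0..h} (\<lambda>t. U t x)) - integral {0..h} (\<lambda>t. U t x)) /\<^sub>R t) (at_right 0)"
    by (rule eventually_at_rightI[of 0 1])
      (use assms in \<open>simp_all add: integral_translate scaleR_diff_right\<close>)
  ultimately show ?thesis
    unfolding generator_at_def zero using Lim_transform_eventually by fastforce
qed

end

lemma strongly_continuous_group_exp_rescaled:
  assumes "strongly_continuous_group U"
  shows "strongly_continuous_group (\<lambda>t x. exp (c * t) *\<^sub>R U t x)"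
proof -
  interpret strongly_continuous_group U by fact
  show ?thesis
  proof (rule strongly_continuous_group.intro)
    show "bounded_linear (\<lambda>x. exp (c * t) *\<^sub>R U t x)" for t
      by (rule bounded_linear_compose[OF bounded_linear_scaleR_right bounded_linear_op])
    show "continuous_on UNIV (\<lambda>t. exp (c * t) *\<^sub>R U t x)" for x
      by (intro continuous_intros continuous)
  qed (simp_all add: zero add linear_scale[OF linear_op] distrib_left exp_add)
qed

section \<open>Representations of the ax+b group\<close>

lemma word_app_snoc:
  assumes "word_app T js g y" "generator_at (oneparam T j) x g"
  shows "word_app T (js @ [j]) x y"
  using assms by (induction rule: word_app.induct) (auto intro: word_app.intros)

locale axb_rep =
  fixes T :: "real \<times> real \<Rightarrow> 'a::banach \<Rightarrow> 'a"
  assumes contr_rep: "contr_rep T"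
begin

definition T1 :: "real \<Rightarrow> 'a \<Rightarrow> 'a" where
  "T1 t = T (exp t, 0)"

definition T2 :: "real \<Rightarrow> 'a \<Rightarrow> 'a" where
  "T2 t = T (1, t)"

lemma oneparam_eq: "oneparam T 1 = T1" "oneparam T 2 = T2"
  by (auto simp: oneparam_def T1_def T2_def fun_eq_iff)

lemma T_mult:
  assumes "fst g1 > 0" "fst g2 > 0"
  shows "T g1 (T g2 x) = T (axb_mult g1 g2) x"
proof -
  have "T (axb_mult g1 g2) = T g1 \<circ> T g2"
    using contr_rep assms unfolding contr_rep_def by blast
  then show ?thesis
    by simp
qed

lemma bounded_linear_T: "fst g > 0 \<Longrightarrow> bounded_linear (T g)"
  using contr_rep unfolding contr_rep_def by blast

lemma T_unit: "T (1, 0) x = x"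
  using contr_rep by (simp add: contr_rep_def)

lemma continuous_on_T: "continuous_on ({0<..} \<times> UNIV) (\<lambda>g. T g x)"
  using contr_rep by (simp add: contr_rep_def)

sublocale T1: strongly_continuous_group T1
proof (rule strongly_continuous_group.intro)
  show "bounded_linear (T1 t)" for t
    by (simp add: T1_def bounded_linear_T)
  show "T1 (s + t) x = T1 s (T1 t x)" for s t x
    by (simp add: T1_def T_mult axb_mult_def exp_add)
  show "T1 0 x = x" for x
    by (simp add: T1_def T_unit)
  show "continuous_on UNIV (\<lambda>t. T1 t x)" for x
    unfolding T1_def
    by (rule continuous_on_compose2[OF continuous_on_T]) (auto intro!: continuous_intros)
qed

sublocale T2: strongly_continuous_group T2
proof (rule strongly_continuous_group.intro)
  show "bounded_linear (T2 t)" for t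
    by (simp add: T2_def bounded_linear_T)
  show "T2 (s + t) x = T2 s (T2 t x)" for s t x
    by (simp add: T2_def T_mult axb_mult_def add.commute)
  show "T2 0 x = x" for x
    by (simp add: T2_def T_unit)
  show "continuous_on UNIV (\<lambda>t. T2 t x)" for x
    unfolding T2_def
    by (rule continuous_on_compose2[OF continuous_on_T]) (auto intro!: continuous_intros)
qed

lemma norm_T1_le: "norm (T1 t x) \<le> norm x"
  using contr_rep by (simp add: contr_rep_def T1_def)

lemma T2_T1: "T2 u (T1 t x) = T1 t (T2 (exp (- t) * u) x)"
  by (simp add: T1_def T2_def T_mult axb_mult_def exp_minus field_simps)

lemma T2_quotient_T1:
  assumes "u > 0"
  shows "(T2 u (exp (- real a * t) *\<^sub>R T1 t z) - exp (- real a * t) *\<^sub>R T1 t z) /\<^sub>R u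
    = exp (- real (Suc a) * t) *\<^sub>R T1 t ((T2 (exp (- t) * u) z - z) /\<^sub>R (exp (- t) * u))"
proof -
  have "(T2 u (exp (- real a * t) *\<^sub>R T1 t z) - exp (- real a * t) *\<^sub>R T1 t z) /\<^sub>R u
      = exp (- real a * t) *\<^sub>R T1 t ((T2 (exp (- t) * u) z - z) /\<^sub>R u)"
    by (simp add: T2_T1 T1.linear_op_simps T2.linear_op_simps scaleR_diff_right mult.commute)
  also have "(T2 (exp (- t) * u) z - z) /\<^sub>R u
      = exp (- t) *\<^sub>R ((T2 (exp (- t) * u) z - z) /\<^sub>R (exp (- t) * u))"
    using assms by simp
  moreover have "exp (- real a * t) * exp (- t) = exp (- real (Suc a) * t)"
    by (simp add: algebra_simps flip: exp_add)
  ultimately show ?thesis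
    by (simp add: linear_scale[OF T1.linear_op])
qed

lemma dist_T2_quotient_T1_le:
  assumes "u > 0" "t \<ge> 0"
  shows "dist ((T2 u (exp (- real a * t) *\<^sub>R T1 t z) - exp (- real a * t) *\<^sub>R T1 t z) /\<^sub>R u)
      (exp (- real (Suc a) * t) *\<^sub>R T1 t y)
    \<le> norm ((T2 (exp (- t) * u) z - z) /\<^sub>R (exp (- t) * u) - y)"
    (is "dist ?lhs _ \<le> norm ?w")
proof -
  have "?lhs - exp (- real (Suc a) * t) *\<^sub>R T1 t y = exp (- real (Suc a) * t) *\<^sub>R T1 t ?w"
    unfolding T2_quotient_T1[OF \<open>u > 0\<close>] by (simp only: T1.linear_op_simps scaleR_diff_right)
  moreover have "exp (- real (Suc a) * t) \<le> 1"
    using \<open>t \<ge> 0\<close> by (simp add: mult_nonpos_nonneg)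
  then have "exp (- real (Suc a) * t) * norm (T1 t ?w) \<le> norm ?w"
    using mult_left_le_one_le[OF norm_ge_zero less_imp_le[OF exp_gt_zero]] norm_T1_le[of t ?w]
    by (meson order_trans)
  ultimately show ?thesis
    by (simp add: dist_norm)
qed

lemma generator_T1_T1:
  assumes "generator_at T1 w v"
  shows "generator_at T1 (T1 c w) (T1 c v)"
proof -
  have "generator_at T1 (T1 c w) (1 *\<^sub>R T1 c v)"
    by (rule generator_at_intertwining[OF T1.bounded_linear_op zero_less_one _ assms])
      (simp add: add.commute flip: T1.add)
  then show ?thesis
    by simp
qed

lemma generator_T2_T1:
  "generator_at T2 w v \<Longrightarrow> generator_at T2 (T1 c w) (exp (- c) *\<^sub>R T1 c v)"
  by (rule generator_at_intertwining[OF T1.bounded_linear_op]) (simp_all add: T2_T1)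

fun smooth :: "nat \<Rightarrow> 'a \<Rightarrow> bool" where
  "smooth 0 x \<longleftrightarrow> True"
| "smooth (Suc k) x \<longleftrightarrow>
    (\<exists>y. generator_at T1 x y \<and> smooth k y) \<and> (\<exists>y. generator_at T2 x y \<and> smooth k y)"

fun smooth_T2 :: "nat \<Rightarrow> 'a \<Rightarrow> bool" where
  "smooth_T2 0 x \<longleftrightarrow> True"
| "smooth_T2 (Suc k) x \<longleftrightarrow> (\<exists>y. generator_at T2 x y \<and> smooth_T2 k y)"

lemma smooth_add: "smooth k x \<Longrightarrow> smooth k x' \<Longrightarrow> smooth k (x + x')"
proof (induction k arbitrary: x x')
  case (Suc k)
  then show ?case
    by (auto intro: generator_at_add T1.linear_op T2.linear_op)
qed simp

lemma smooth_scaleR: "smooth k x \<Longrightarrow> smooth k (c *\<^sub>R x)"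
proof (induction k arbitrary: x)
  case (Suc k)
  then show ?case
    by (auto intro: generator_at_scaleR T1.linear_op T2.linear_op)
qed simp

lemma smooth_diff: "smooth k x \<Longrightarrow> smooth k x' \<Longrightarrow> smooth k (x - x')"
  using smooth_add[of k x "(- 1) *\<^sub>R x'"] smooth_scaleR[of k x' "- 1"] by simp

lemma smooth_T2_SucD: "smooth_T2 (Suc k) x \<Longrightarrow> smooth_T2 k x"
  by (induction k arbitrary: x) auto

lemma smooth_imp_Er:
  assumes "smooth k x"
  shows "x \<in> Er T k"
proof -
  have "\<exists>y. word_app T js x y"
    if "smooth k x" "length js \<le> k" "set js \<subseteq> {1, 2}" for js k x
    using that
  proof (induction js arbitrary: k x rule: rev_induct)
    case Nil
    then show ?case
      by (auto intro: word_app.nil)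
  next
    case (snoc j js)
    then obtain k' where k: "k = Suc k'"
      by (cases k) auto
    from snoc.prems(3) have "j = 1 \<or> j = 2"
      by auto
    then have "oneparam T j = T1 \<or> oneparam T j = T2"
      using oneparam_eq by metis
    with snoc.prems(1) obtain g where "generator_at (oneparam T j) x g" "smooth k' g"
      by (auto simp: k)
    with snoc.IH[of k' g] snoc.prems show ?case
      by (auto simp: k intro: word_app_snoc)
  qed
  with assms show ?thesis
    by (auto simp: Er_def)
qed

end

section \<open>Weighted Steklov means and the operator P_r(s)\<close>

locale axb_rep_mean = axb_rep +
  fixes h :: real
  assumes h_pos: "h > 0"
begin

definition M1 :: "nat \<Rightarrow> 'a \<Rightarrow> 'a" where
  "M1 a x = integral {0..h} (\<lambda>t. exp (- real a * t) *\<^sub>R T1 t x)"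

definition M2 :: "'a \<Rightarrow> 'a" where
  "M2 x = integral {0..h} (\<lambda>t. T2 t x)"

lemma generator_T1_M1:
  "generator_at T1 (M1 a x) ((exp (- real a * h) *\<^sub>R T1 h x - x) + real a *\<^sub>R M1 a x)"
proof -
  have "generator_at (\<lambda>t x. exp (- real a * t) *\<^sub>R T1 t x) (M1 a x)
      (exp (- real a * h) *\<^sub>R T1 h x - x)"
    unfolding M1_def
    by (rule strongly_continuous_group.generator_at_integral
        [OF strongly_continuous_group_exp_rescaled[OF T1.strongly_continuous_group_axioms] h_pos])
  from generator_at_exp_rescaled[OF this] show ?thesis
    by simp
qed

lemma generator_T2_M2: "generator_at T2 (M2 x) (T2 h x - x)"
  unfolding M2_def by (rule T2.generator_at_integral[OF h_pos])

lemma uniform_limit_T2_quotient: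
  assumes gen: "generator_at T2 z y"
  shows "uniform_limit {0..h}
    (\<lambda>u t. (T2 u (exp (- real a * t) *\<^sub>R T1 t z) - exp (- real a * t) *\<^sub>R T1 t z) /\<^sub>R u)
    (\<lambda>t. exp (- real (Suc a) * t) *\<^sub>R T1 t y) (at_right 0)"
  unfolding uniform_limit_iff
proof (intro allI impI)
  fix \<epsilon> :: real
  assume "\<epsilon> > 0"
  define q where "q v = (T2 v z - z) /\<^sub>R v" for v
  from tendstoD[OF gen[unfolded generator_at_def] \<open>\<epsilon> > 0\<close>] obtain b where "b > 0"
    and b: "\<And>v. 0 < v \<Longrightarrow> v < b \<Longrightarrow> dist (q v) y < \<epsilon>"
    unfolding eventually_at_right_field q_def by blast
  have "dist ((T2 u (exp (- real a * t) *\<^sub>R T1 t z) - exp (- real a * t) *\<^sub>R T1 t z) /\<^sub>R u)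
      (exp (- real (Suc a) * t) *\<^sub>R T1 t y) < \<epsilon>"
    if u: "0 < u" "u < b" and t: "t \<in> {0..h}" for u t
  proof -
    have "exp (- t) * u \<le> u"
      using t u by (simp add: mult_left_le_one_le)
    then have "dist (q (exp (- t) * u)) y < \<epsilon>"
      using u by (intro b) (simp, linarith)
    with dist_T2_quotient_T1_le[OF u(1), of t a z y] t show ?thesis
      by (simp add: q_def dist_norm)
  qed
  then show "\<forall>\<^sub>F u in at_right 0. \<forall>t\<in>{0..h}.
      dist ((T2 u (exp (- real a * t) *\<^sub>R T1 t z) - exp (- real a * t) *\<^sub>R T1 t z) /\<^sub>R u)
        (exp (- real (Suc a) * t) *\<^sub>R T1 t y) < \<epsilon>"
    using \<open>b > 0\<close> unfolding eventually_at_right_field by blast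
qed

lemma generator_T2_M1:
  assumes "generator_at T2 z y"
  shows "generator_at T2 (M1 a z) (M1 (Suc a) y)"
  unfolding M1_def
  by (rule generator_at_integral_of_uniform
      [OF T2.bounded_linear_op _ uniform_limit_T2_quotient[OF assms]])
    (intro continuous_intros continuous_on_subset[OF T1.continuous], simp)

lemma M2_T2_diff: "M2 (T2 c x - x) = T2 c (M2 x) - M2 x"
  unfolding M2_def
  by (simp add: T2.linear_op_simps T2.integral_commute integral_diff T2.integrable)

lemma M2_power_T2_diff: "(M2 ^^ p) (T2 c x - x) = T2 c ((M2 ^^ p) x) - (M2 ^^ p) x"
  by (induction p) (simp_all add: M2_T2_diff)

lemma smooth_T2_M2_power: "smooth_T2 p ((M2 ^^ p) x)"
proof (induction p arbitrary: x)
  case (Suc p)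
  have "generator_at T2 ((M2 ^^ Suc p) x) ((M2 ^^ p) (T2 h x - x))"
    using generator_T2_M2[of "(M2 ^^ p) x"] by (simp add: M2_power_T2_diff)
  with Suc.IH show ?case
    by auto
qed simp

lemma generator_T2_foldr_M1:
  "generator_at T2 z y \<Longrightarrow> generator_at T2 (foldr M1 as z) (foldr M1 (map Suc as) y)"
  by (induction as) (auto intro: generator_T2_M1)

lemma smooth_T1_foldr_M1:
  "k \<le> length as \<Longrightarrow> smooth_T2 k z \<Longrightarrow> smooth k (T1 c (foldr M1 as z))"
proof (induction k arbitrary: c as z)
  case (Suc k)
  then obtain a as' where as: "as = a # as'" and "k \<le> length as'"
    by (cases as) auto
  define x where "x = foldr M1 as' z"
  have foldr_as: "foldr M1 as z = M1 a x"
    by (simp add: as x_def)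
  have "smooth_T2 k z"
    using Suc.prems(2) by (rule smooth_T2_SucD)
  have smooth_x: "smooth k (T1 c' x)" for c'
    unfolding x_def using Suc.IH \<open>k \<le> length as'\<close> \<open>smooth_T2 k z\<close> .
  have "smooth k (T1 c (M1 a x))"
    using Suc.IH[of as z c] Suc.prems(1) \<open>smooth_T2 k z\<close> by (simp add: foldr_as)
  with smooth_x
  have "smooth k (T1 c ((exp (- real a * h) *\<^sub>R T1 h x - x) + real a *\<^sub>R M1 a x))"
    by (simp add: T1.linear_op_simps smooth_add smooth_diff smooth_scaleR flip: T1.add)
  moreover have "generator_at T1 (T1 c (foldr M1 as z))
      (T1 c ((exp (- real a * h) *\<^sub>R T1 h x - x) + real a *\<^sub>R M1 a x))"
    unfolding foldr_as by (intro generator_T1_T1 generator_T1_M1)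
  moreover obtain y where "generator_at T2 z y" "smooth_T2 k y"
    using Suc.prems(2) by auto
  then have "generator_at T2 (T1 c (foldr M1 as z))
      (exp (- c) *\<^sub>R T1 c (foldr M1 (map Suc as) y))"
    by (intro generator_T2_T1 generator_T2_foldr_M1)
  moreover have "smooth k (exp (- c) *\<^sub>R T1 c (foldr M1 (map Suc as) y))"
    using Suc.IH Suc.prems(1) \<open>smooth_T2 k y\<close> by (simp add: smooth_scaleR)
  ultimately show ?case
    by auto
qed simp

lemma cube_int_T2:
  "bounded_linear L \<Longrightarrow> cube_int n h (\<lambda>ts. L (T2 (sum_list ts) x)) = L ((M2 ^^ n) x)"
proof (induction n arbitrary: L)
  case (Suc n)
  have "cube_int (Suc n) h (\<lambda>ts. L (T2 (sum_list ts) x))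
      = integral {0..h} (\<lambda>t. cube_int n h (\<lambda>ts. (L \<circ> T2 t) (T2 (sum_list ts) x)))"
    by (simp add: T2.add)
  also have "\<dots> = integral {0..h} (\<lambda>t. L (T2 t ((M2 ^^ n) x)))"
    by (simp only: Suc.IH[OF bounded_linear_compose[OF Suc.prems T2.bounded_linear_op]] o_apply)
  also have "\<dots> = L ((M2 ^^ Suc n) x)"
    using integral_linear[OF T2.integrable Suc.prems] by (simp add: o_def M2_def)
  finally show ?case .
qed (simp add: T2.zero)

lemma cube_int_T1_T2:
  "bounded_linear L \<Longrightarrow>
    cube_int (n + m) h (\<lambda>ts. L (T1 (sum_list (take n ts)) (T2 (sum_list (drop n ts)) x)))
      = L ((M1 0 ^^ n) ((M2 ^^ m) x))"
proof (induction n arbitrary: L)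
  case 0
  then show ?case
    by (simp add: T1.zero cube_int_T2)
next
  case (Suc n)
  have "cube_int (Suc n + m) h
        (\<lambda>ts. L (T1 (sum_list (take (Suc n) ts)) (T2 (sum_list (drop (Suc n) ts)) x)))
      = integral {0..h} (\<lambda>t. cube_int (n + m) h
          (\<lambda>ts. (L \<circ> T1 t) (T1 (sum_list (take n ts)) (T2 (sum_list (drop n ts)) x))))"
    by (simp add: T1.add)
  also have "\<dots> = integral {0..h} (\<lambda>t. L (T1 t ((M1 0 ^^ n) ((M2 ^^ m) x))))"
    by (simp only: Suc.IH[OF bounded_linear_compose[OF Suc.prems T1.bounded_linear_op]] o_apply)
  also have "\<dots> = L ((M1 0 ^^ Suc n) ((M2 ^^ m) x))"
    using integral_linear[OF T1.integrable Suc.prems] by (simp add: o_def M1_def)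
  finally show ?case .
qed

lemma hs_op_eq:
  "s / real r = h \<Longrightarrow>
    hs_op T r s f = inverse (h ^ (2 * r)) *\<^sub>R (M1 0 ^^ r) ((M2 ^^ r) f)"
  using cube_int_T1_T2[OF bounded_linear_ident, of r r f]
  unfolding hs_op_def oneparam_eq by (simp add: mult_2)

end

theorem mainTheorem9:
  fixes T :: "real \<times> real \<Rightarrow> 'a::banach \<Rightarrow> 'a"
    and r :: nat and s :: real
  assumes "contr_rep T"
    and "r \<ge> 1"
    and "s > 0"
  shows "\<forall>f. hs_op T r s f \<in> Er T r"
proof
  fix f
  interpret axb_rep_mean T "s / real r"
    by unfold_locales (use assms in auto)
  have "smooth r ((M1 0 ^^ r) ((M2 ^^ r) f))"
    using smooth_T1_foldr_M1[of r "replicate r 0" "(M2 ^^ r) f" 0] smooth_T2_M2_power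
    by (simp add: T1.zero)
  then have "smooth r (hs_op T r s f)"
    by (simp add: hs_op_eq smooth_scaleR)
  then show "hs_op T r s f \<in> Er T r"
    by (rule smooth_imp_Er)
qed

end
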